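(* Let $P=\langle(\mathcal Q,\le),N\rangle$ be a possibilistic normal program such that $(\mathcal Q,\le)$ is a totally ordered set and the language of $P$ has no extended (strongly negated) atoms. Then $M$ is a possibilistic answer set of $P$ if and only if $M$ is a possibilistic stable model of $P$.
   Context: $(\mathcal Q,\le)$ is a finite (here totally ordered) lattice with top $\top_{\mathcal Q}$. A possibilistic normal program is $P=\langle(\mathcal Q,\le),N\rangle$ where $N$ is a finite set of clauses $r=\alpha:a\leftarrow\mathcal B^+,not\ \mathcal B^-$ with exactly one head atom $a$, $\alpha\in\mathcal Q$; $n(r)=\alpha$, $r^*$ the underlying clause, $P^*=\{r^*\}$. Answer sets of $P^*$ are Gelfond–Lifschitz answer sets. $\mathcal{PS}$: sets of pairs (atom, element of $\mathcal Q$) with each atom at most once; $M^*$ its atoms; $A\sqsubseteq B$ iff $A^*\subseteq B^*$ and $\gamma\le\delta$ whenever $(x,\gamma)\in A,(x,\delta)\in B$. Reduct $P_M=\{n(r):(\{a\}\cap M)\leftarrow\mathcal B^+\mid r\in N, a\in M,\mathcal B^-\cap M=\emptyset,\mathcal B^+\subseteq M\}$. $\vdash_{PL}$ is necessity-valued possibilistic-logic inference (clauses read as weighted implications; classical axioms weighted $\top_{\mathcal Q}$; rules $(\varphi\ \gamma),(\varphi\to\psi\ \delta)\vdash(\psi\ \min\{\gamma,\delta\})$ and weakening $(\varphi\ \gamma)\vdash(\varphi\ \epsilon)$ for $\epsilon\le\gamma$). $P\Vvdash_{PL}M$ iff $M^*$ is an answer set of $P^*$ and $P_{M^*}\vdash_{PL}(a\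 \gamma)$ for all $(a,\gamma)\in M$. $M$ is a possibilistic answer set iff $M^*$ is an answer set of $P^*$, $P\Vvdash_{PL}M$, and there is no $M''\ne M$ in $\mathcal{PS}$ with $M\sqsubseteq M''$ and $P\Vvdash_{PL}M''$. Possibilistic stable models (Nicolas et al.): for a set of atoms $S$, the reduct $P^S=\{n(r):a\leftarrow\mathcal B^+\mid r\in N,\ \mathcal B^-\cap S=\emptyset\}$; for a definite possibilistic program $D$ and $A\in\mathcal{PS}$, $T_D(A)$ assigns to each atom $a$ that is the head of some $r\in D$ with $\mathcal B^+(r)\subseteq A^*$ the value $\max$ over such $r$ of $\min(\{n(r)\}\cup\{\beta:(b,\beta)\in A,b\in\mathcal B^+(r)\})$; $Cn(D)$ is the least fixpoint of $T_D$ obtained by iterating from $\emptyset$. $M$ is a possibilistic stable model of $P$ iff $M=Cn(P^{M^*})$. *)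

theory Defs
  imports Main
begin

text \<open>A possibilistic normal clause  alpha : a <- B+, not B-.  Bodies are given as lists
  (finite sets of atoms); only their sets matter.  The lattice Q is the type 'q,
  a finite linear order with top.\<close>

datatype ('a, 'q) pclause =
  PClause (weight: 'q) (head: 'a) (pos: "'a list") (neg: "'a list")

type_synonym ('a, 'q) pprogram = "('a, 'q) pclause set"

definition gl_reduct :: "('a, 'q) pprogram \<Rightarrow> 'a set \<Rightarrow> ('a \<times> 'a set) set" where
  "gl_reduct N S = {(head r, set (pos r)) | r. r \<in> N \<and> set (neg r) \<inter> S = {}}"

definition least_model :: "('a \<times> 'a set) set \<Rightarrow> 'a set" where
  "least_model D = \<Inter> {S. \<forall>(h, B) \<in> D. B \<subseteq> S \<longrightarrow> h \<in> S}"

definition answer_set :: "('a, 'q) pprogram \<Rightarrow> 'a set \<Rightarrow> bool" where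
  "answer_set N S \<longleftrightarrow> S = least_model (gl_reduct N S)"

definition is_PS :: "('a \<times> 'q) set \<Rightarrow> bool" where
  "is_PS M \<longleftrightarrow> (\<forall>x g d. (x, g) \<in> M \<longrightarrow> (x, d) \<in> M \<longrightarrow> g = d)"

definition atoms_of :: "('a \<times> 'q) set \<Rightarrow> 'a set" where
  "atoms_of M = fst ` M"

definition ps_le :: "('a \<times> 'q::order) set \<Rightarrow> ('a \<times> 'q) set \<Rightarrow> bool" where
  "ps_le A B \<longleftrightarrow> atoms_of A \<subseteq> atoms_of B \<and>
     (\<forall>x g d. (x, g) \<in> A \<longrightarrow> (x, d) \<in> B \<longrightarrow> g \<le> d)"

datatype 'a form = FTop | FAtom 'a | FNot "'a form" | FAnd "'a form" "'a form"
  | FOr "'a form" "'a form" | FImp "'a form" "'a form"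

fun feval :: "('a \<Rightarrow> bool) \<Rightarrow> 'a form \<Rightarrow> bool" where
  "feval v FTop = True"
| "feval v (FAtom a) = v a"
| "feval v (FNot f) = (\<not> feval v f)"
| "feval v (FAnd f g) = (feval v f \<and> feval v g)"
| "feval v (FOr f g) = (feval v f \<or> feval v g)"
| "feval v (FImp f g) = (feval v f \<longrightarrow> feval v g)"

definition tautology :: "'a form \<Rightarrow> bool" where
  "tautology f \<longleftrightarrow> (\<forall>v. feval v f)"

definition clause_form :: "'a list \<Rightarrow> 'a \<Rightarrow> 'a form" where
  "clause_form bs a = FImp (foldr (\<lambda>b f. FAnd (FAtom b) f) bs FTop) (FAtom a)"

inductive pl_derives :: "('q \<times> 'a form) set \<Rightarrow> 'a form \<Rightarrow> 'q::{linorder, order_top} \<Rightarrow> bool"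
  for \<Gamma> where
  pl_premise: "(\<alpha>, \<phi>) \<in> \<Gamma> \<Longrightarrow> pl_derives \<Gamma> \<phi> \<alpha>"
| pl_axiom: "tautology \<phi> \<Longrightarrow> pl_derives \<Gamma> \<phi> top"
| pl_mp: "pl_derives \<Gamma> \<phi> \<gamma> \<Longrightarrow> pl_derives \<Gamma> (FImp \<phi> \<psi>) \<delta> \<Longrightarrow> pl_derives \<Gamma> \<psi> (min \<gamma> \<delta>)"
| pl_weak: "pl_derives \<Gamma> \<phi> \<gamma> \<Longrightarrow> \<epsilon> \<le> \<gamma> \<Longrightarrow> pl_derives \<Gamma> \<phi> \<epsilon>"

definition poss_reduct :: "('a, 'q) pprogram \<Rightarrow> 'a set \<Rightarrow> ('q \<times> 'a form) set" where
  "poss_reduct N S = {(weight r, clause_form (pos r) (head r)) | r.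
      r \<in> N \<and> head r \<in> S \<and> set (neg r) \<inter> S = {} \<and> set (pos r) \<subseteq> S}"

definition pl_entails :: "('a, 'q::{linorder, order_top}) pprogram \<Rightarrow> ('a \<times> 'q) set \<Rightarrow> bool" where
  "pl_entails N M \<longleftrightarrow> answer_set N (atoms_of M) \<and>
     (\<forall>(a, \<gamma>) \<in> M. pl_derives (poss_reduct N (atoms_of M)) (FAtom a) \<gamma>)"

definition poss_answer_set :: "('a, 'q::{linorder, order_top}) pprogram \<Rightarrow> ('a \<times> 'q) set \<Rightarrow> bool" where
  "poss_answer_set N M \<longleftrightarrow> is_PS M \<and> answer_set N (atoms_of M) \<and> pl_entails N M \<and>
     \<not> (\<exists>M''. is_PS M'' \<and> M'' \<noteq> M \<and> ps_le M M'' \<and> pl_entails N M'')"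

definition stable_reduct :: "('a, 'q) pprogram \<Rightarrow> 'a set \<Rightarrow> ('a, 'q) pprogram" where
  "stable_reduct N S = {PClause (weight r) (head r) (pos r) [] | r. r \<in> N \<and> set (neg r) \<inter> S = {}}"

definition rule_val :: "('a \<times> 'q::linorder) set \<Rightarrow> ('a, 'q) pclause \<Rightarrow> 'q" where
  "rule_val A r = Min (insert (weight r) {\<beta>. \<exists>b \<in> set (pos r). (b, \<beta>) \<in> A})"

definition T_op :: "('a, 'q::linorder) pprogram \<Rightarrow> ('a \<times> 'q) set \<Rightarrow> ('a \<times> 'q) set" where
  "T_op D A = {(a, Max {rule_val A r | r. r \<in> D \<and> head r = a \<and> set (pos r) \<subseteq> atoms_of A}) | a.
      \<exists>r \<in> D. head r = a \<and> set (pos r) \<subseteq> atoms_of A}"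

definition Cn :: "('a, 'q::linorder) pprogram \<Rightarrow> ('a \<times> 'q) set" where
  "Cn D = (THE A. \<exists>n. A = (T_op D ^^ n) {} \<and> T_op D A = A)"

definition poss_stable_model :: "('a, 'q::linorder) pprogram \<Rightarrow> ('a \<times> 'q) set \<Rightarrow> bool" where
  "poss_stable_model N M \<longleftrightarrow> M = Cn (stable_reduct N (atoms_of M))"

end

theory Submission
  imports Defs
begin

text \<open>Both semantics are governed by the weight cuts of the Gelfond-Lifschitz reduct: an atom is
  derivable in possibilistic logic with necessity g exactly when it is derivable from the rules
  of weight at least g, and the fixpoint Cn of the reduct assigns to each atom the greatest such
  g.  Hence Cn is the greatest possibilistic set that is entailed with the given atoms, and since
  answer sets of a normal program are pairwise incomparable, the maximal entailed sets of the
  answer-set semantics are exactly these fixpoints.\<close>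

section \<open>Derivability from definite rules\<close>

definition weight_cut :: "('a, 'q::linorder) pprogram \<Rightarrow> 'q \<Rightarrow> ('a, 'q) pprogram" where
  "weight_cut D g = {r \<in> D. g \<le> weight r}"

text \<open>Negative bodies are ignored: this is the least model of the positive part of D.\<close>
inductive_set derivable :: "('a, 'q) pprogram \<Rightarrow> 'a set" for D where
  derivableI: "r \<in> D \<Longrightarrow> \<forall>b\<in>set (pos r). b \<in> derivable D \<Longrightarrow> head r \<in> derivable D"

lemma derivable_intro: "r \<in> D \<Longrightarrow> set (pos r) \<subseteq> derivable D \<Longrightarrow> head r \<in> derivable D"
  by (rule derivableI) blast+

lemma derivable_mono:
  assumes "D \<subseteq> D'"
  shows "derivable D \<subseteq> derivable D'"
proof
  fix x assume "x \<in> derivable D"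
  then show "x \<in> derivable D'"
    by induction (use assms in \<open>blast intro: derivable_intro\<close>)
qed

lemma derivable_image:
  assumes "\<And>r. r \<in> D \<Longrightarrow> head (f r) = head r \<and> pos (f r) = pos r"
  shows "derivable (f ` D) = derivable D"
proof
  show "derivable (f ` D) \<subseteq> derivable D"
  proof
    fix x assume "x \<in> derivable (f ` D)"
    then show "x \<in> derivable D"
    proof induction
      case (derivableI r')
      then obtain r where "r \<in> D" "r' = f r" by blast
      with derivableI(2) show ?case
        using assms derivable_intro by (metis subsetI)
    qed
  qed
  show "derivable D \<subseteq> derivable (f ` D)"
  proof
    fix x assume "x \<in> derivable D"
    then show "x \<in> derivable (f ` D)"
      by (induction rule: derivable.induct) (metis assms derivable_intro image_eqI subsetI)
  qed
qed

lemma weight_cut_antimono: "g \<le> d \<Longrightarrow> weight_cut D d \<subseteq> weight_cut D g"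
  unfolding weight_cut_def by auto

lemma weight_cut_subset: "weight_cut D g \<subseteq> D"
  unfolding weight_cut_def by auto

lemma weight_cut_Min: "weight_cut D (Min (UNIV :: 'q::{finite, linorder} set)) = D"
  unfolding weight_cut_def by auto

lemma weight_cut_image:
  "(\<And>r. r \<in> D \<Longrightarrow> weight (f r) = weight r) \<Longrightarrow> weight_cut (f ` D) g = f ` weight_cut D g"
  unfolding weight_cut_def by auto

lemma least_model_eq_derivable:
  "least_model {(head r, set (pos r)) | r. r \<in> D} = derivable D"
proof
  have "derivable D \<in> {S. \<forall>(h, B) \<in> {(head r, set (pos r)) | r. r \<in> D}. B \<subseteq> S \<longrightarrow> h \<in> S}"
    by (auto intro: derivable_intro)
  then show "least_model {(head r, set (pos r)) | r. r \<in> D} \<subseteq> derivable D"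
    unfolding least_model_def by blast
  show "derivable D \<subseteq> least_model {(head r, set (pos r)) | r. r \<in> D}"
  proof
    fix x assume "x \<in> derivable D"
    then show "x \<in> least_model {(head r, set (pos r)) | r. r \<in> D}"
      unfolding least_model_def by induction blast
  qed
qed

definition gl_rules :: "('a, 'q) pprogram \<Rightarrow> 'a set \<Rightarrow> ('a, 'q) pprogram" where
  "gl_rules N S = {r \<in> N. set (neg r) \<inter> S = {}}"

lemma answer_set_iff_derivable: "answer_set N S \<longleftrightarrow> S = derivable (gl_rules N S)"
proof -
  have "gl_reduct N S = {(head r, set (pos r)) | r. r \<in> gl_rules N S}"
    unfolding gl_reduct_def gl_rules_def by blast
  then show ?thesis
    unfolding answer_set_def by (simp add: least_model_eq_derivable)
qed

lemma answer_set_subset_imp_eq: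
  assumes "answer_set N S" "answer_set N S'" "S \<subseteq> S'"
  shows "S' = S"
proof -
  have "gl_rules N S' \<subseteq> gl_rules N S"
    using assms(3) unfolding gl_rules_def by blast
  then have "derivable (gl_rules N S') \<subseteq> derivable (gl_rules N S)"
    by (rule derivable_mono)
  then show ?thesis
    using assms by (simp add: answer_set_iff_derivable)
qed

section \<open>Possibilistic inference from the reduct\<close>

lemma feval_conj_atoms:
  "feval v (foldr (\<lambda>b f. FAnd (FAtom b) f) bs FTop) \<longleftrightarrow> (\<forall>b\<in>set bs. v b)"
  by (induction bs) auto

lemma pl_derives_sound:
  assumes "pl_derives \<Gamma> \<phi> g" "\<And>\<alpha> \<psi>. (\<alpha>, \<psi>) \<in> \<Gamma> \<Longrightarrow> g \<le> \<alpha> \<Longrightarrow> feval v \<psi>"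
  shows "feval v \<phi>"
  using assms
proof (induction rule: pl_derives.induct)
  case (pl_axiom \<phi>)
  then show ?case by (simp add: tautology_def)
next
  case (pl_mp \<phi> \<gamma> \<psi> \<delta>)
  have "feval v \<phi>" "feval v (FImp \<phi> \<psi>)"
    using pl_mp.IH pl_mp.prems by (meson min.cobounded1 min.cobounded2 order_trans)+
  then show ?case by simp
qed (auto intro: order_trans)

lemma pl_derives_conj_atoms:
  assumes "\<forall>b\<in>set bs. pl_derives \<Gamma> (FAtom b) g"
  shows "pl_derives \<Gamma> (foldr (\<lambda>b f. FAnd (FAtom b) f) bs FTop) g"
  using assms
proof (induction bs)
  case Nil
  have "pl_derives \<Gamma> FTop top"
    by (rule pl_axiom) (simp add: tautology_def)
  then show ?case
    using pl_weak[OF _ top_greatest] by simp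
next
  case (Cons b bs)
  let ?f = "foldr (\<lambda>b f. FAnd (FAtom b) f) bs FTop"
  have "pl_derives \<Gamma> (FImp (FAtom b) (FImp ?f (FAnd (FAtom b) ?f))) top"
    by (rule pl_axiom) (simp add: tautology_def)
  with Cons.prems have "pl_derives \<Gamma> (FImp ?f (FAnd (FAtom b) ?f)) (min g top)"
    using pl_mp by fastforce
  moreover have "pl_derives \<Gamma> ?f g"
    using Cons by simp
  ultimately have "pl_derives \<Gamma> (FAnd (FAtom b) ?f) (min g g)"
    using pl_mp by fastforce
  then show ?case by simp
qed

lemma pl_derives_reduct_iff_derivable:
  assumes "answer_set N S"
  shows "pl_derives (poss_reduct N S) (FAtom a) g \<longleftrightarrow>
    a \<in> derivable (weight_cut (gl_rules N S) g)"
proof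
  let ?v = "\<lambda>x. x \<in> derivable (weight_cut (gl_rules N S) g)"
  assume "pl_derives (poss_reduct N S) (FAtom a) g"
  then have "feval ?v (FAtom a)"
  proof (rule pl_derives_sound)
    fix \<alpha> \<psi> assume "(\<alpha>, \<psi>) \<in> poss_reduct N S" "g \<le> \<alpha>"
    then obtain r where r: "r \<in> weight_cut (gl_rules N S) g"
      and \<psi>: "\<psi> = clause_form (pos r) (head r)"
      unfolding poss_reduct_def weight_cut_def gl_rules_def by blast
    then show "feval ?v \<psi>"
      using derivable_intro[OF r] by (simp add: \<psi> clause_form_def feval_conj_atoms subset_iff)
  qed
  then show "a \<in> derivable (weight_cut (gl_rules N S) g)" by simp
next
  have S: "derivable (gl_rules N S) = S"
    using assms unfolding answer_set_iff_derivable by (rule sym)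
  assume "a \<in> derivable (weight_cut (gl_rules N S) g)"
  then show "pl_derives (poss_reduct N S) (FAtom a) g"
  proof induction
    case (derivableI r)
    have r: "r \<in> gl_rules N S" "g \<le> weight r"
      using derivableI(1) unfolding weight_cut_def by auto
    have "set (pos r) \<subseteq> derivable (weight_cut (gl_rules N S) g)"
      using derivableI(2) by blast
    also have "\<dots> \<subseteq> derivable (gl_rules N S)"
      by (rule derivable_mono[OF weight_cut_subset])
    finally have "set (pos r) \<subseteq> derivable (gl_rules N S)" .
    moreover from this have "head r \<in> derivable (gl_rules N S)"
      using r(1) by (intro derivable_intro)
    ultimately have "set (pos r) \<subseteq> S" "head r \<in> S"
      unfolding S by simp_all
    with r(1) have "(weight r, clause_form (pos r) (head r)) \<in> poss_reduct N S"
      unfolding poss_reduct_def gl_rules_def by blast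
    then have "pl_derives (poss_reduct N S) (clause_form (pos r) (head r)) g"
      using r(2) by (rule pl_weak[OF pl_premise])
    moreover have "pl_derives (poss_reduct N S) (foldr (\<lambda>b f. FAnd (FAtom b) f) (pos r) FTop) g"
      using derivableI(2) by (intro pl_derives_conj_atoms) blast
    ultimately have "pl_derives (poss_reduct N S) (FAtom (head r)) (min g g)"
      unfolding clause_form_def by (rule pl_mp[rotated])
    then show ?case by simp
  qed
qed

lemma atoms_of_iff: "x \<in> atoms_of A \<longleftrightarrow> (\<exists>g. (x, g) \<in> A)"
  unfolding atoms_of_def by force

lemma ps_le_refl: "is_PS A \<Longrightarrow> ps_le A A"
  unfolding ps_le_def is_PS_def by auto

lemma ps_le_empty: "ps_le {} A"
  by (simp add: ps_le_def atoms_of_def)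

lemma ps_le_witness:
  assumes "ps_le A B" "(x, g) \<in> A"
  obtains d where "(x, d) \<in> B" "g \<le> d"
proof -
  have "x \<in> atoms_of A"
    using assms(2) unfolding atoms_of_iff ..
  then have "x \<in> atoms_of B"
    using assms(1) unfolding ps_le_def by blast
  then obtain d where "(x, d) \<in> B"
    unfolding atoms_of_iff ..
  moreover from this have "g \<le> d"
    using assms unfolding ps_le_def by blast
  ultimately show ?thesis ..
qed

lemma ps_le_trans:
  assumes "ps_le A B" "ps_le B (C :: ('a \<times> 'q::order) set)"
  shows "ps_le A C"
  unfolding ps_le_def
proof (intro conjI allI impI)
  show "atoms_of A \<subseteq> atoms_of C"
    using assms unfolding ps_le_def by blast
  fix x g d assume xg: "(x, g) \<in> A" and xd: "(x, d) \<in> C"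
  obtain e where "(x, e) \<in> B" "g \<le> e"
    using assms(1) xg by (rule ps_le_witness)
  moreover from this have "e \<le> d"
    using assms(2) xd unfolding ps_le_def by blast
  ultimately show "g \<le> d" by simp
qed

lemma ps_le_antisym:
  assumes "ps_le A B" "ps_le B (A :: ('a \<times> 'q::order) set)"
  shows "A = B"
proof -
  have "(x, g) \<in> B" if AB: "ps_le A B" and BA: "ps_le B A" and xg: "(x, g) \<in> A"
    for A B :: "('a \<times> 'q) set" and x g
  proof -
    obtain d where xd: "(x, d) \<in> B" "g \<le> d"
      using AB xg by (rule ps_le_witness)
    moreover have "d \<le> g"
      using BA xg xd(1) unfolding ps_le_def by blast
    ultimately show ?thesis by simp
  qed
  then show ?thesis
    using assms by auto
qed

section \<open>The immediate consequence operator\<close>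

lemma T_op_mem_iff:
  "(a, g) \<in> T_op D A \<longleftrightarrow> (\<exists>r\<in>D. head r = a \<and> set (pos r) \<subseteq> atoms_of A) \<and>
     g = Max {rule_val A r | r. r \<in> D \<and> head r = a \<and> set (pos r) \<subseteq> atoms_of A}"
  unfolding T_op_def by blast

lemma T_op_is_PS: "is_PS (T_op D A)"
  unfolding is_PS_def T_op_mem_iff by blast

lemma T_op_subset_heads: "T_op D A \<subseteq> head ` D \<times> UNIV"
  unfolding T_op_def by auto

lemma rule_val_le_weight:
  fixes r :: "('a, 'q::{finite, linorder}) pclause"
  shows "rule_val A r \<le> weight r"
  unfolding rule_val_def by (rule Min_le) auto

lemma rule_val_le_body:
  fixes r :: "('a, 'q::{finite, linorder}) pclause"
  shows "b \<in> set (pos r) \<Longrightarrow> (b, \<beta>) \<in> A \<Longrightarrow> rule_val A r \<le> \<beta>"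
  unfolding rule_val_def by (rule Min_le) auto

lemma rule_val_greatest:
  fixes r :: "('a, 'q::{finite, linorder}) pclause"
  assumes "d \<le> weight r" "\<And>b \<beta>. b \<in> set (pos r) \<Longrightarrow> (b, \<beta>) \<in> A \<Longrightarrow> d \<le> \<beta>"
  shows "d \<le> rule_val A r"
  unfolding rule_val_def using assms by (subst Min_ge_iff) auto

context
  fixes D :: "('a, 'q::{finite, linorder}) pprogram"
begin

lemma rule_val_mono:
  assumes "ps_le A B" "set (pos r) \<subseteq> atoms_of A"
  shows "rule_val A r \<le> rule_val B (r :: ('a, 'q) pclause)"
proof (rule rule_val_greatest[OF rule_val_le_weight])
  fix b \<beta> assume b: "b \<in> set (pos r)" "(b, \<beta>) \<in> B"
  have "b \<in> atoms_of A"
    using assms(2) b(1) by blast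
  then obtain \<gamma> where \<gamma>: "(b, \<gamma>) \<in> A"
    unfolding atoms_of_iff ..
  have "rule_val A r \<le> \<gamma>"
    using b(1) \<gamma> by (rule rule_val_le_body)
  also have "\<gamma> \<le> \<beta>"
    using assms(1) \<gamma> b(2) unfolding ps_le_def by blast
  finally show "rule_val A r \<le> \<beta>" .
qed

lemma T_op_memE:
  assumes "(a, g) \<in> T_op D A"
  obtains r where "r \<in> D" "head r = a" "set (pos r) \<subseteq> atoms_of A" "g = rule_val A r"
proof -
  have "Max {rule_val A r | r. r \<in> D \<and> head r = a \<and> set (pos r) \<subseteq> atoms_of A}
      \<in> {rule_val A r | r. r \<in> D \<and> head r = a \<and> set (pos r) \<subseteq> atoms_of A}"
    using assms unfolding T_op_mem_iff by (intro Max_in) auto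
  then obtain r where "r \<in> D" "head r = a" "set (pos r) \<subseteq> atoms_of A"
    "Max {rule_val A r | r. r \<in> D \<and> head r = a \<and> set (pos r) \<subseteq> atoms_of A} = rule_val A r"
    by blast
  moreover have "g = Max {rule_val A r | r. r \<in> D \<and> head r = a \<and> set (pos r) \<subseteq> atoms_of A}"
    using assms unfolding T_op_mem_iff by blast
  ultimately show ?thesis
    using that by simp
qed

lemma T_op_fires:
  assumes "r \<in> D" "set (pos r) \<subseteq> atoms_of A"
  obtains g where "(head r, g) \<in> T_op D A" "rule_val A r \<le> g"
proof -
  let ?g = "Max {rule_val A r' | r'. r' \<in> D \<and> head r' = head r \<and> set (pos r') \<subseteq> atoms_of A}"
  have "(head r, ?g) \<in> T_op D A"
    using assms unfolding T_op_mem_iff by blast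
  moreover have "rule_val A r \<le> ?g"
    using assms by (intro Max_ge) auto
  ultimately show ?thesis ..
qed

lemma rule_val_le_T_op:
  assumes "r \<in> D" "set (pos r) \<subseteq> atoms_of A" "(head r, d) \<in> T_op D A"
  shows "rule_val A r \<le> d"
proof -
  obtain g where "(head r, g) \<in> T_op D A" "rule_val A r \<le> g"
    using assms(1,2) by (rule T_op_fires)
  moreover from this have "g = d"
    using assms(3) T_op_is_PS[of D A] unfolding is_PS_def by blast
  ultimately show ?thesis by simp
qed

lemma T_op_mono:
  assumes "ps_le A B"
  shows "ps_le (T_op D A) (T_op D B)"
proof -
  have AB: "atoms_of A \<subseteq> atoms_of B"
    using assms unfolding ps_le_def by blast
  have "atoms_of (T_op D A) \<subseteq> atoms_of (T_op D B)"
  proof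
    fix x assume "x \<in> atoms_of (T_op D A)"
    then obtain g where "(x, g) \<in> T_op D A"
      unfolding atoms_of_iff ..
    then obtain r where r: "r \<in> D" "head r = x" "set (pos r) \<subseteq> atoms_of A"
      by (rule T_op_memE)
    have "set (pos r) \<subseteq> atoms_of B"
      using r(3) AB by blast
    with r(1) obtain d where "(head r, d) \<in> T_op D B"
      by (rule T_op_fires)
    then show "x \<in> atoms_of (T_op D B)"
      using r(2) unfolding atoms_of_iff by blast
  qed
  moreover have "g \<le> d" if xg: "(x, g) \<in> T_op D A" and xd: "(x, d) \<in> T_op D B" for x g d
  proof -
    obtain r where r: "r \<in> D" "head r = x" "set (pos r) \<subseteq> atoms_of A" "g = rule_val A r"
      using xg by (rule T_op_memE)
    have "rule_val A r \<le> rule_val B r"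
      using assms r(3) by (rule rule_val_mono)
    also have "\<dots> \<le> d"
      using r(1) r(3) AB xd r(2) by (intro rule_val_le_T_op) auto
    finally show ?thesis using r(4) by simp
  qed
  ultimately show ?thesis
    unfolding ps_le_def by blast
qed

abbreviation T_iter :: "nat \<Rightarrow> ('a \<times> 'q) set" where
  "T_iter n \<equiv> (T_op D ^^ n) {}"

lemma T_iter_is_PS: "is_PS (T_iter n)"
  by (cases n) (simp_all add: T_op_is_PS is_PS_def[of "{}"])

lemma T_iter_Suc: "ps_le (T_iter k) (T_iter (Suc k))"
  by (induction k) (simp_all add: ps_le_empty T_op_mono)

lemma T_iter_mono: "i \<le> j \<Longrightarrow> ps_le (T_iter i) (T_iter j)"
proof (induction j)
  case 0
  then show ?case by (simp add: ps_le_empty)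
next
  case (Suc j)
  show ?case
  proof (cases "i = Suc j")
    case True
    show ?thesis
      unfolding True by (rule ps_le_refl[OF T_iter_is_PS])
  next
    case False
    then have "ps_le (T_iter i) (T_iter j)"
      using Suc by simp
    then show ?thesis
      using T_iter_Suc[of j] by (rule ps_le_trans)
  qed
qed

text \<open>The iterates form an increasing chain in the finite set Pow (head ` D \<times> UNIV).\<close>
lemma T_iter_fixpoint_exists:
  assumes "finite D"
  shows "\<exists>n. T_op D (T_iter n) = T_iter n"
proof (rule ccontr)
  assume no_fix: "\<nexists>n. T_op D (T_iter n) = T_iter n"
  have distinct: "T_iter i \<noteq> T_iter j" if "i < j" for i j
  proof
    assume eq: "T_iter i = T_iter j"
    have "ps_le (T_iter (Suc i)) (T_iter j)"
      using that by (intro T_iter_mono) simp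
    then have "ps_le (T_iter (Suc i)) (T_iter i)"
      by (simp only: eq)
    then have "T_iter (Suc i) = T_iter i"
      using T_iter_Suc[of i] by (rule ps_le_antisym)
    with no_fix show False
      by simp
  qed
  have "inj T_iter"
  proof (rule injI)
    fix i j assume "T_iter i = T_iter j"
    then show "i = j"
      using distinct[of i j] distinct[of j i] linorder_neqE_nat by blast
  qed
  moreover have "range T_iter \<subseteq> Pow (head ` D \<times> (UNIV :: 'q set))"
  proof (rule image_subsetI)
    fix n show "T_iter n \<in> Pow (head ` D \<times> UNIV)"
      using T_op_subset_heads by (cases n) auto
  qed
  then have "finite (range T_iter)"
    by (rule finite_subset) (simp add: assms)
  ultimately have "finite (UNIV :: nat set)"
    by (rule finite_imageD[rotated])
  then show False by simp
qed

lemma Cn_eq_T_iter_fixpoint: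
  assumes "finite D"
  obtains n where "Cn D = T_iter n" "T_op D (Cn D) = Cn D"
proof -
  obtain n where n: "T_op D (T_iter n) = T_iter n"
    using T_iter_fixpoint_exists[OF assms] by blast
  have stable: "T_iter m = T_iter n" if "T_op D (T_iter n) = T_iter n" "n \<le> m" for n m
    using that(2) by (induction m) (use that(1) le_Suc_eq in auto)
  have "Cn D = T_iter n"
    unfolding Cn_def
  proof (rule the_equality)
    fix A assume "\<exists>m. A = T_iter m \<and> T_op D A = A"
    then obtain m where "A = T_iter m" "T_op D (T_iter m) = T_iter m" by blast
    then show "A = T_iter n"
      using stable[of m "max m n"] stable[OF n, of "max m n"] by simp
  qed (use n in auto)
  with n show ?thesis
    using that by simp
qed

lemma Cn_is_PS:
  assumes "finite D"
  shows "is_PS (Cn D)"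
proof -
  obtain n where "Cn D = T_iter n" "T_op D (Cn D) = Cn D"
    by (rule Cn_eq_T_iter_fixpoint[OF assms])
  then show ?thesis
    using T_iter_is_PS by simp
qed

lemma T_iter_sound: "(a, g) \<in> T_iter n \<Longrightarrow> a \<in> derivable (weight_cut D g)"
proof (induction n arbitrary: a g)
  case (Suc n)
  then have "(a, g) \<in> T_op D (T_iter n)"
    by simp
  then obtain r where r: "r \<in> D" "head r = a" "set (pos r) \<subseteq> atoms_of (T_iter n)"
    "g = rule_val (T_iter n) r"
    by (rule T_op_memE)
  have "set (pos r) \<subseteq> derivable (weight_cut D g)"
  proof
    fix b assume b: "b \<in> set (pos r)"
    then have "b \<in> atoms_of (T_iter n)"
      using r(3) by blast
    then obtain \<beta> where \<beta>: "(b, \<beta>) \<in> T_iter n"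
      unfolding atoms_of_iff ..
    have "g \<le> \<beta>"
      using rule_val_le_body[OF b \<beta>] r(4) by simp
    then have "derivable (weight_cut D \<beta>) \<subseteq> derivable (weight_cut D g)"
      by (intro derivable_mono weight_cut_antimono)
    with Suc.IH[OF \<beta>] show "b \<in> derivable (weight_cut D g)"
      by blast
  qed
  moreover have "r \<in> weight_cut D g"
    using r rule_val_le_weight unfolding weight_cut_def by simp
  ultimately show ?case
    using derivable_intro[of r] r(2) by simp
qed simp

lemma fixpoint_complete:
  assumes "is_PS F" "T_op D F = F" "a \<in> derivable (weight_cut D d)"
  obtains g where "(a, g) \<in> F" "d \<le> g"
  using assms(3) that
proof (induction arbitrary: thesis)
  case (derivableI r)
  have r: "r \<in> D" "d \<le> weight r"
    using derivableI(1) unfolding weight_cut_def by auto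
  have IH: "\<exists>g. (b, g) \<in> F \<and> d \<le> g" if "b \<in> set (pos r)" for b
    using derivableI(2) that by blast
  have body: "set (pos r) \<subseteq> atoms_of F"
  proof
    fix b assume "b \<in> set (pos r)"
    with IH show "b \<in> atoms_of F"
      unfolding atoms_of_iff by blast
  qed
  have "d \<le> rule_val F r"
  proof (rule rule_val_greatest[OF r(2)])
    fix b \<beta> assume "b \<in> set (pos r)" "(b, \<beta>) \<in> F"
    with IH assms(1) show "d \<le> \<beta>"
      unfolding is_PS_def by blast
  qed
  moreover obtain g where "(head r, g) \<in> T_op D F" "rule_val F r \<le> g"
    using r(1) body by (rule T_op_fires)
  ultimately show ?case
    using derivableI(3) assms(2) by (simp add: order_trans)
qed

lemma Cn_mem_iff:
  assumes "finite D"
  shows "(a, g) \<in> Cn D \<longleftrightarrow>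
    a \<in> derivable (weight_cut D g) \<and> (\<forall>d. a \<in> derivable (weight_cut D d) \<longrightarrow> d \<le> g)"
proof -
  obtain n where n: "Cn D = T_iter n" "T_op D (Cn D) = Cn D"
    using Cn_eq_T_iter_fixpoint[OF assms] .
  have PS: "is_PS (Cn D)"
    using Cn_is_PS[OF assms] .
  have sound: "a \<in> derivable (weight_cut D g')" if "(a, g') \<in> Cn D" for g'
    using T_iter_sound that n(1) by simp
  note complete = fixpoint_complete[OF PS n(2)]
  show ?thesis
  proof
    assume ag: "(a, g) \<in> Cn D"
    have "d \<le> g" if ad: "a \<in> derivable (weight_cut D d)" for d
    proof -
      obtain g' where "(a, g') \<in> Cn D" "d \<le> g'"
        using ad by (rule complete)
      moreover from this have "g' = g"
        using PS ag unfolding is_PS_def by blast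
      ultimately show ?thesis by simp
    qed
    with sound[OF ag] show
      "a \<in> derivable (weight_cut D g) \<and> (\<forall>d. a \<in> derivable (weight_cut D d) \<longrightarrow> d \<le> g)"
      by blast
  next
    assume greatest: "a \<in> derivable (weight_cut D g) \<and> (\<forall>d. a \<in> derivable (weight_cut D d) \<longrightarrow> d \<le> g)"
    then obtain g' where g': "(a, g') \<in> Cn D" "g \<le> g'"
      using complete by blast
    moreover have "g' \<le> g"
      using greatest sound[OF g'(1)] by blast
    ultimately show "(a, g) \<in> Cn D"
      by simp
  qed
qed

lemma atoms_of_Cn:
  assumes "finite D"
  shows "atoms_of (Cn D) = derivable D"
proof
  show "atoms_of (Cn D) \<subseteq> derivable D"
  proof
    fix a assume "a \<in> atoms_of (Cn D)"
    then obtain g where "(a, g) \<in> Cn D"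
      unfolding atoms_of_iff ..
    then have "a \<in> derivable (weight_cut D g)"
      using Cn_mem_iff[OF assms] by blast
    then show "a \<in> derivable D"
      using derivable_mono[OF weight_cut_subset[of D g]] by blast
  qed
  obtain n where fixpoint: "T_op D (Cn D) = Cn D"
    using Cn_eq_T_iter_fixpoint[OF assms] .
  show "derivable D \<subseteq> atoms_of (Cn D)"
  proof
    fix a assume "a \<in> derivable D"
    then have "a \<in> derivable (weight_cut D (Min UNIV))"
      by (simp only: weight_cut_Min)
    then obtain g where "(a, g) \<in> Cn D" "Min UNIV \<le> g"
      by (rule fixpoint_complete[OF Cn_is_PS[OF assms] fixpoint])
    then show "a \<in> atoms_of (Cn D)"
      unfolding atoms_of_iff by blast
  qed
qed

end

section \<open>Possibilistic stable models and entailment\<close>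

lemma stable_reduct_eq_image:
  "stable_reduct N S = (\<lambda>r. PClause (weight r) (head r) (pos r) []) ` gl_rules N S"
  unfolding stable_reduct_def gl_rules_def by blast

lemma derivable_weight_cut_stable_reduct:
  "derivable (weight_cut (stable_reduct N S) g) = derivable (weight_cut (gl_rules N S) g)"
  unfolding stable_reduct_eq_image
  by (subst weight_cut_image) (simp_all add: derivable_image)

lemma finite_stable_reduct: "finite N \<Longrightarrow> finite (stable_reduct N S)"
  unfolding stable_reduct_eq_image gl_rules_def by simp

lemma Cn_stable_reduct_mem_iff:
  fixes N :: "('a, 'q::{finite, linorder}) pprogram"
  assumes "finite N"
  shows "(a, g) \<in> Cn (stable_reduct N S) \<longleftrightarrow> a \<in> derivable (weight_cut (gl_rules N S) g) \<and>
    (\<forall>d. a \<in> derivable (weight_cut (gl_rules N S) d) \<longrightarrow> d \<le> g)"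
  unfolding Cn_mem_iff[OF finite_stable_reduct[OF assms]] derivable_weight_cut_stable_reduct ..

lemma atoms_of_Cn_stable_reduct:
  fixes N :: "('a, 'q::{finite, linorder}) pprogram"
  assumes "finite N"
  shows "atoms_of (Cn (stable_reduct N S)) = derivable (gl_rules N S)"
  using atoms_of_Cn[OF finite_stable_reduct[OF assms]]
    derivable_weight_cut_stable_reduct[of N S "Min UNIV"]
  by (simp only: weight_cut_Min)

lemma atoms_of_Cn_stable_reduct_answer_set:
  fixes N :: "('a, 'q::{finite, linorder}) pprogram"
  assumes "finite N" "answer_set N S"
  shows "atoms_of (Cn (stable_reduct N S)) = S"
  using assms(2) unfolding atoms_of_Cn_stable_reduct[OF assms(1)] answer_set_iff_derivable
  by (rule sym)

lemma poss_stable_model_answer_set: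
  fixes N :: "('a, 'q::{finite, linorder}) pprogram"
  assumes "finite N" "poss_stable_model N M"
  shows "answer_set N (atoms_of M)"
  unfolding answer_set_iff_derivable
  using atoms_of_Cn_stable_reduct[OF assms(1)] assms(2)
  unfolding poss_stable_model_def by metis

lemma pl_entails_Cn_stable_reduct:
  fixes N :: "('a, 'q::{finite, linorder, order_top}) pprogram"
  assumes "finite N" "answer_set N S"
  shows "pl_entails N (Cn (stable_reduct N S))"
proof -
  have atoms: "atoms_of (Cn (stable_reduct N S)) = S"
    using assms by (rule atoms_of_Cn_stable_reduct_answer_set)
  have "pl_derives (poss_reduct N S) (FAtom a) g" if "(a, g) \<in> Cn (stable_reduct N S)" for a g
    using that Cn_stable_reduct_mem_iff[OF assms(1)] pl_derives_reduct_iff_derivable[OF assms(2)]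
    by blast
  then show ?thesis
    using assms(2) unfolding pl_entails_def atoms by blast
qed

lemma pl_entails_ps_le_Cn_stable_reduct:
  fixes N :: "('a, 'q::{finite, linorder, order_top}) pprogram"
  assumes "finite N" "pl_entails N M"
  shows "ps_le M (Cn (stable_reduct N (atoms_of M)))"
proof -
  let ?S = "atoms_of M"
  have AS: "answer_set N ?S"
    using assms(2) unfolding pl_entails_def by blast
  have "a \<in> derivable (weight_cut (gl_rules N ?S) g)" if "(a, g) \<in> M" for a g
    using assms(2) that pl_derives_reduct_iff_derivable[OF AS] unfolding pl_entails_def by blast
  then show ?thesis
    using atoms_of_Cn_stable_reduct_answer_set[OF assms(1) AS]
    unfolding ps_le_def Cn_stable_reduct_mem_iff[OF assms(1)] by blast
qed

lemma pl_entails_extension_of_Cn_stable_reduct: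
  fixes N :: "('a, 'q::{finite, linorder, order_top}) pprogram"
  assumes "finite N" "answer_set N S"
    and "ps_le (Cn (stable_reduct N S)) M" "pl_entails N M"
  shows "M = Cn (stable_reduct N S)"
proof -
  have atoms: "atoms_of (Cn (stable_reduct N S)) = S"
    using assms(1,2) by (rule atoms_of_Cn_stable_reduct_answer_set)
  have "atoms_of M = S"
    using assms(2-4) atoms unfolding pl_entails_def ps_le_def
    by (intro answer_set_subset_imp_eq) auto
  then have "ps_le M (Cn (stable_reduct N S))"
    using pl_entails_ps_le_Cn_stable_reduct[OF assms(1,4)] by simp
  with assms(3) show ?thesis
    by (rule ps_le_antisym[symmetric])
qed

theorem proposition5:
  fixes N :: "('a, 'q::{finite, linorder, order_top}) pprogram"
    and M :: "('a \<times> 'q) set"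
  assumes "finite N"
  shows "poss_answer_set N M \<longleftrightarrow> poss_stable_model N M"
proof
  let ?C = "Cn (stable_reduct N (atoms_of M))"
  assume "poss_answer_set N M"
  then have ent: "pl_entails N M"
    and maximal: "\<nexists>M''. is_PS M'' \<and> M'' \<noteq> M \<and> ps_le M M'' \<and> pl_entails N M''"
    unfolding poss_answer_set_def by blast+
  have "is_PS ?C" "ps_le M ?C" "pl_entails N ?C"
    using Cn_is_PS[OF finite_stable_reduct[OF assms]] pl_entails_ps_le_Cn_stable_reduct[OF assms ent]
      pl_entails_Cn_stable_reduct[OF assms] ent unfolding pl_entails_def by blast+
  with maximal show "poss_stable_model N M"
    unfolding poss_stable_model_def by blast
next
  assume M: "poss_stable_model N M"
  then have AS: "answer_set N (atoms_of M)"
    by (rule poss_stable_model_answer_set[OF assms])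
  then have "is_PS M" "pl_entails N M"
    using M Cn_is_PS[OF finite_stable_reduct[OF assms]] pl_entails_Cn_stable_reduct[OF assms]
    unfolding poss_stable_model_def by metis+
  moreover have "M'' = M" if "ps_le M M''" "pl_entails N M''" for M''
    using pl_entails_extension_of_Cn_stable_reduct[OF assms AS] that M
    unfolding poss_stable_model_def by metis
  ultimately show "poss_answer_set N M"
    unfolding poss_answer_set_def using AS by blast
qed

end
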